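(* Let $\theta_1<\theta_2$, $f\in C^1([\theta_1,\theta_2])$, $\gamma>1$, and let $I\subseteq[\theta_1,\theta_2]$ be a closed interval. Suppose that, for positive constants $A$ and $\alpha$ with $\alpha<2\gamma-2$, one of the following holds: $(f'(s))^2\ge A(s-\theta_1)^\alpha$ for all $s\in I$; or $(f'(s))^2\ge A(\theta_2-s)^\alpha$ for all $s\in I$. Then there is a constant $C>0$ depending only on $A,\alpha,\theta_1,\theta_2,\gamma$ such that $\int_I|f(s)|^{-1/\gamma}\,ds\le C$. *)

theory Defs
  imports "HOL-Analysis.Analysis"
begin

end

(* The hypothesis gives |f'| >= sqrt A * d^(alpha/2), where d is the distance to an endpoint of
   [theta1, theta2].  So f' has no zero inside I and keeps its sign there, and integrating the
   bound gives |f x - f t| >= k |x - t|^p with p = alpha/2 + 1.  If z minimises |f| on I, then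
   f s - f z has the sign of f s, so |f s| >= k |s - z|^p, and |f|^(-1/gamma) is dominated by a
   multiple of |s - z|^(-p/gamma), which is integrable since p/gamma < 1 is exactly the
   hypothesis alpha < 2 gamma - 2. *)

theory Submission
  imports Defs
begin

lemma diff_le_diff_of_deriv_le:
  fixes g h g' h' :: "real \<Rightarrow> real"
  assumes "t \<le> x" and "continuous_on {t..x} g" and "continuous_on {t..x} h"
    and "\<And>s. t < s \<Longrightarrow> s < x \<Longrightarrow> (g has_real_derivative g' s) (at s)"
    and "\<And>s. t < s \<Longrightarrow> s < x \<Longrightarrow> (h has_real_derivative h' s) (at s)"
    and "\<And>s. t < s \<Longrightarrow> s < x \<Longrightarrow> h' s \<le> g' s"
  shows "h x - h t \<le> g x - g t"
proof -
  have "(\<lambda>s. g s - h s) t \<le> (\<lambda>s. g s - h s) x"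
  proof (rule DERIV_nonneg_imp_increasing_open[OF \<open>t \<le> x\<close>])
    fix s assume "t < s" "s < x"
    with assms show "\<exists>y. ((\<lambda>s. g s - h s) has_real_derivative y) (at s) \<and> 0 \<le> y"
      by (intro exI[of _ "g' s - h' s"]) (auto intro!: derivative_eq_intros)
  qed (use assms in \<open>auto intro!: continuous_intros\<close>)
  then show ?thesis by simp
qed

lemma continuous_on_nonzero_sign_cases:
  fixes g :: "real \<Rightarrow> real"
  assumes "continuous_on {a<..<b} g" and "\<And>s. a < s \<Longrightarrow> s < b \<Longrightarrow> g s \<noteq> 0"
  shows "(\<forall>s\<in>{a<..<b}. g s > 0) \<or> (\<forall>s\<in>{a<..<b}. g s < 0)"
proof (rule ccontr)
  assume "\<not> ?thesis"
  then obtain s1 s2 where "s1 \<in> {a<..<b}" "s2 \<in> {a<..<b}" "g s1 \<le> 0" "g s2 \<ge> 0"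
    by (auto simp: not_less)
  moreover have "connected (g ` {a<..<b})"
    using assms(1) by (rule connected_continuous_image) simp
  ultimately have "0 \<in> g ` {a<..<b}"
    using connected_contains_Icc[of "g ` {a<..<b}" "g s1" "g s2"] by auto
  with assms(2) show False by auto
qed

lemma diff_le_abs_diff_of_deriv_le_abs_deriv:
  fixes f f' h h' :: "real \<Rightarrow> real"
  assumes "t \<le> x" and "continuous_on {t..x} f" and "continuous_on {t..x} h"
    and "continuous_on {t<..<x} f'"
    and "\<And>s. t < s \<Longrightarrow> s < x \<Longrightarrow> (f has_real_derivative f' s) (at s)"
    and "\<And>s. t < s \<Longrightarrow> s < x \<Longrightarrow> (h has_real_derivative h' s) (at s)"
    and "\<And>s. t < s \<Longrightarrow> s < x \<Longrightarrow> 0 < h' s"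
    and "\<And>s. t < s \<Longrightarrow> s < x \<Longrightarrow> h' s \<le> \<bar>f' s\<bar>"
  shows "h x - h t \<le> \<bar>f x - f t\<bar>"
proof -
  have "f' s \<noteq> 0" if "t < s" "s < x" for s
    using assms(7,8) that by force
  with assms(4) consider "\<forall>s\<in>{t<..<x}. f' s > 0" | "\<forall>s\<in>{t<..<x}. f' s < 0"
    using continuous_on_nonzero_sign_cases by blast
  then show ?thesis
  proof cases
    case 1
    with assms have "h x - h t \<le> f x - f t"
      by (intro diff_le_diff_of_deriv_le[where g' = f' and h' = h']) (auto simp: abs_of_pos)
    then show ?thesis by linarith
  next
    case 2
    with assms have "h x - h t \<le> (- f x) - (- f t)"
      by (intro diff_le_diff_of_deriv_le[where g' = "\<lambda>s. - f' s" and h' = h'])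
        (auto simp: abs_of_neg intro!: derivative_eq_intros continuous_intros)
    then show ?thesis by linarith
  qed
qed

lemma abs_diff_ge_powr_of_abs_deriv_ge:
  fixes f f' :: "real \<Rightarrow> real"
  assumes "t \<le> x" and "0 < c" and "0 \<le> \<beta>"
    and "continuous_on {t..x} f" and "continuous_on {t<..<x} f'"
    and "\<And>s. t < s \<Longrightarrow> s < x \<Longrightarrow> (f has_real_derivative f' s) (at s)"
    and "(\<forall>s\<in>{t<..<x}. c * (s - t) powr \<beta> \<le> \<bar>f' s\<bar>) \<or> (\<forall>s\<in>{t<..<x}. c * (x - s) powr \<beta> \<le> \<bar>f' s\<bar>)"
  shows "c / (\<beta> + 1) * (x - t) powr (\<beta> + 1) \<le> \<bar>f x - f t\<bar>"
  using assms(7)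
proof
  assume bound: "\<forall>s\<in>{t<..<x}. c * (s - t) powr \<beta> \<le> \<bar>f' s\<bar>"
  define h where "h s = c / (\<beta> + 1) * (s - t) powr (\<beta> + 1)" for s
  have "(h has_real_derivative c * (s - t) powr \<beta>) (at s)" if "t < s" for s
  proof -
    have "((\<lambda>s. s - t) has_real_derivative 1) (at s)"
      by (auto intro!: derivative_eq_intros)
    from DERIV_fun_powr[OF this, of "\<beta> + 1"] that assms(3) show ?thesis
      unfolding h_def by (auto intro!: derivative_eq_intros)
  qed
  moreover have "continuous_on {t..x} h"
    unfolding h_def using assms(3) by (auto intro!: continuous_intros continuous_on_powr')
  ultimately have "h x - h t \<le> \<bar>f x - f t\<bar>"
    using assms bound
    by (intro diff_le_abs_diff_of_deriv_le_abs_deriv[where h' = "\<lambda>s. c * (s - t) powr \<beta>"]) auto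
  then show ?thesis by (simp add: h_def)
next
  assume bound: "\<forall>s\<in>{t<..<x}. c * (x - s) powr \<beta> \<le> \<bar>f' s\<bar>"
  define h where "h s = - c / (\<beta> + 1) * (x - s) powr (\<beta> + 1)" for s
  have "(h has_real_derivative c * (x - s) powr \<beta>) (at s)" if "s < x" for s
  proof -
    have "((\<lambda>s. x - s) has_real_derivative - 1) (at s)"
      by (auto intro!: derivative_eq_intros)
    from DERIV_fun_powr[OF this, of "\<beta> + 1"] that assms(3) show ?thesis
      unfolding h_def by (auto intro!: derivative_eq_intros)
  qed
  moreover have "continuous_on {t..x} h"
    unfolding h_def using assms(3) by (auto intro!: continuous_intros continuous_on_powr')
  ultimately have "h x - h t \<le> \<bar>f x - f t\<bar>"
    using assms bound
    by (intro diff_le_abs_diff_of_deriv_le_abs_deriv[where h' = "\<lambda>s. c * (x - s) powr \<beta>"]) auto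
  then show ?thesis by (simp add: h_def)
qed

text \<open>A point where \<open>\<bar>f\<bar>\<close> is minimal works: if \<open>f\<close> changed sign between it and \<open>s\<close>, the minimum would be \<open>0\<close>.\<close>
lemma exists_point_abs_diff_le_abs:
  fixes f :: "real \<Rightarrow> real"
  assumes "a \<le> b" and "continuous_on {a..b} f"
  obtains z where "z \<in> {a..b}" and "\<And>s. s \<in> {a..b} \<Longrightarrow> \<bar>f s - f z\<bar> \<le> \<bar>f s\<bar>"
proof -
  have "continuous_on {a..b} (\<lambda>s. \<bar>f s\<bar>)"
    using assms(2) by (intro continuous_intros)
  then obtain z where z: "z \<in> {a..b}" and min: "\<And>s. s \<in> {a..b} \<Longrightarrow> \<bar>f z\<bar> \<le> \<bar>f s\<bar>"
    using continuous_attains_inf[of "{a..b}" "\<lambda>s. \<bar>f s\<bar>"] assms(1) by auto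
  have "\<bar>f s - f z\<bar> \<le> \<bar>f s\<bar>" if s: "s \<in> {a..b}" for s
  proof (cases "0 \<le> f s * f z")
    case True
    with min[OF s] show ?thesis
      by (cases "0 \<le> f s"; cases "0 \<le> f z") (auto simp: zero_le_mult_iff)
  next
    case False
    have "continuous_on (closed_segment s z) f"
      using s z by (auto intro: continuous_on_subset[OF assms(2)] simp: closed_segment_eq_real_ivl)
    moreover from False have "0 \<in> closed_segment (f s) (f z)"
      by (auto simp: closed_segment_eq_real_ivl zero_le_mult_iff)
    ultimately obtain w where w: "w \<in> closed_segment s z" "f w = 0"
      using IVT'_closed_segment_real by blast
    have "w \<in> {a..b}"
      using w(1) s z by (auto simp: closed_segment_eq_real_ivl split: if_splits)
    with min w(2) False show ?thesis by force
  qed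
  with z that show ?thesis by blast
qed

lemma has_integral_abs_diff_powr:
  fixes q L z :: real
  assumes "q < 1" and "0 \<le> L"
  shows "((\<lambda>s. \<bar>s - z\<bar> powr - q) has_integral 2 * (L powr (1 - q) / (1 - q))) {z - L..z + L}"
proof -
  have right: "((\<lambda>u. \<bar>u\<bar> powr - q) has_integral L powr (1 - q) / (1 - q)) {0..L}"
    using has_integral_powr_from_0[of "- q" L] assms by (auto intro: has_integral_eq[rotated])
  then have left: "((\<lambda>u. \<bar>u\<bar> powr - q) has_integral L powr (1 - q) / (1 - q)) {- L..0}"
    by (subst has_integral_reflect_real[symmetric]) simp
  have "((\<lambda>u. \<bar>u\<bar> powr - q) has_integral 2 * (L powr (1 - q) / (1 - q))) {- L..L}"
    using has_integral_combine[OF _ _ left right] assms(2) by simp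
  from has_integral_shift_real_ivl[OF this, of "- z"] show ?thesis
    by (simp add: add.commute)
qed

lemma nn_integral_abs_powr_neg_le:
  fixes g :: "real \<Rightarrow> real"
  assumes "0 < k" and "0 < \<gamma>" and "p < \<gamma>" and "z \<in> {a..b}"
    and growth: "\<And>s. s \<in> {a..b} \<Longrightarrow> k * \<bar>s - z\<bar> powr p \<le> \<bar>g s\<bar>"
  shows "(\<integral>\<^sup>+ s\<in>{a..b}. ennreal (\<bar>g s\<bar> powr (- 1 / \<gamma>)) \<partial>lborel)
    \<le> ennreal (k powr (- 1 / \<gamma>) * (2 * ((b - a) powr (1 - p / \<gamma>) / (1 - p / \<gamma>))))"
proof -
  define K q L where "K = k powr (- 1 / \<gamma>)" and "q = p / \<gamma>" and "L = b - a"
  have q: "q < 1" and L: "0 \<le> L" and K: "0 < K"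
    using assms unfolding K_def q_def L_def by auto
  have pointwise: "\<bar>g s\<bar> powr (- 1 / \<gamma>) \<le> K * \<bar>s - z\<bar> powr - q"
    if "s \<in> {a..b}" "s \<noteq> z" for s
  proof -
    have "\<bar>g s\<bar> powr (- 1 / \<gamma>) \<le> (k * \<bar>s - z\<bar> powr p) powr (- 1 / \<gamma>)"
      using growth[OF that(1)] that(2) assms(1,2) by (intro powr_mono2') auto
    also have "\<dots> = K * \<bar>s - z\<bar> powr - q"
      using assms(1) unfolding K_def q_def by (simp add: powr_mult powr_powr)
    finally show ?thesis .
  qed
  have subset: "{a..b} \<subseteq> {z - L..z + L}"
    using assms(4) unfolding L_def by auto
  have "AE s in lborel. ennreal (\<bar>g s\<bar> powr (- 1 / \<gamma>)) * indicator {a..b} s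
      \<le> ennreal (K * \<bar>s - z\<bar> powr - q) * indicator {z - L..z + L} s"
    using AE_lborel_singleton[of z] by eventually_elim
      (use pointwise subset in \<open>auto split: split_indicator intro!: ennreal_leI\<close>)
  then have "(\<integral>\<^sup>+ s\<in>{a..b}. ennreal (\<bar>g s\<bar> powr (- 1 / \<gamma>)) \<partial>lborel)
      \<le> (\<integral>\<^sup>+ s\<in>{z - L..z + L}. ennreal (K * \<bar>s - z\<bar> powr - q) \<partial>lborel)"
    by (rule nn_integral_mono_AE)
  also have "\<dots> = ennreal (K * (2 * (L powr (1 - q) / (1 - q))))"
    using K has_integral_mult_right[OF has_integral_abs_diff_powr[OF q L]]
    by (intro nn_integral_has_integral_lebesgue') auto
  finally show ?thesis
    unfolding K_def q_def L_def .
qed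

lemma sqrt_mult_powr_half_le_abs:
  fixes A w y \<alpha> :: real
  assumes "0 \<le> A" and "0 \<le> w" and "A * w powr \<alpha> \<le> y\<^sup>2"
  shows "sqrt A * w powr (\<alpha> / 2) \<le> \<bar>y\<bar>"
proof -
  have "sqrt A * w powr (\<alpha> / 2) = sqrt (A * w powr \<alpha>)"
    using assms(2) by (simp add: real_sqrt_mult powr_half_sqrt[symmetric] powr_powr)
  also have "\<dots> \<le> \<bar>y\<bar>"
    using assms(3) real_sqrt_le_mono by fastforce
  finally show ?thesis .
qed

lemma abs_diff_ge_powr_of_deriv_sq_ge:
  fixes f f' :: "real \<Rightarrow> real"
  assumes "\<theta>1 \<le> t" and "t \<le> x" and "x \<le> \<theta>2" and "0 < A" and "0 \<le> \<alpha>"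
    and "continuous_on {t..x} f" and "continuous_on {t<..<x} f'"
    and "\<And>s. t < s \<Longrightarrow> s < x \<Longrightarrow> (f has_real_derivative f' s) (at s)"
    and "(\<forall>s\<in>{t<..<x}. A * (s - \<theta>1) powr \<alpha> \<le> (f' s)\<^sup>2)
      \<or> (\<forall>s\<in>{t<..<x}. A * (\<theta>2 - s) powr \<alpha> \<le> (f' s)\<^sup>2)"
  shows "sqrt A / (\<alpha> / 2 + 1) * (x - t) powr (\<alpha> / 2 + 1) \<le> \<bar>f x - f t\<bar>"
proof (rule abs_diff_ge_powr_of_abs_deriv_ge)
  have mono: "sqrt A * u powr (\<alpha> / 2) \<le> sqrt A * v powr (\<alpha> / 2)" if "0 \<le> u" "u \<le> v" for u v
    using that assms(4,5) by (intro mult_left_mono powr_mono2) auto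
  show "(\<forall>s\<in>{t<..<x}. sqrt A * (s - t) powr (\<alpha> / 2) \<le> \<bar>f' s\<bar>)
      \<or> (\<forall>s\<in>{t<..<x}. sqrt A * (x - s) powr (\<alpha> / 2) \<le> \<bar>f' s\<bar>)"
    using assms(9)
  proof (elim disjE)
    assume "\<forall>s\<in>{t<..<x}. A * (s - \<theta>1) powr \<alpha> \<le> (f' s)\<^sup>2"
    then have "sqrt A * (s - t) powr (\<alpha> / 2) \<le> \<bar>f' s\<bar>" if "s \<in> {t<..<x}" for s
      using that assms(1,4)
      by (intro order_trans[OF mono[of "s - t" "s - \<theta>1"] sqrt_mult_powr_half_le_abs]) auto
    then show ?thesis by blast
  next
    assume "\<forall>s\<in>{t<..<x}. A * (\<theta>2 - s) powr \<alpha> \<le> (f' s)\<^sup>2"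
    then have "sqrt A * (x - s) powr (\<alpha> / 2) \<le> \<bar>f' s\<bar>" if "s \<in> {t<..<x}" for s
      using that assms(3,4)
      by (intro order_trans[OF mono[of "x - s" "\<theta>2 - s"] sqrt_mult_powr_half_le_abs]) auto
    then show ?thesis by blast
  qed
qed (use assms in auto)

lemma nn_integral_abs_powr_neg_le_of_deriv_sq_ge:
  fixes f f' :: "real \<Rightarrow> real"
  assumes deriv: "\<forall>s\<in>{\<theta>1..\<theta>2}. (f has_real_derivative f' s) (at s within {\<theta>1..\<theta>2})"
    and cont': "continuous_on {\<theta>1..\<theta>2} f'"
    and ab: "\<theta>1 \<le> a" "a \<le> b" "b \<le> \<theta>2"
    and bound: "(\<forall>s\<in>{a..b}. A * (s - \<theta>1) powr \<alpha> \<le> (f' s)\<^sup>2)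
      \<or> (\<forall>s\<in>{a..b}. A * (\<theta>2 - s) powr \<alpha> \<le> (f' s)\<^sup>2)"
    and "0 < A" and "0 \<le> \<alpha>" and "\<alpha> / 2 + 1 < \<gamma>"
  shows "(\<integral>\<^sup>+ s\<in>{a..b}. ennreal (\<bar>f s\<bar> powr (- 1 / \<gamma>)) \<partial>lborel)
    \<le> ennreal ((sqrt A / (\<alpha> / 2 + 1)) powr (- 1 / \<gamma>)
         * (2 * ((\<theta>2 - \<theta>1) powr (1 - (\<alpha> / 2 + 1) / \<gamma>) / (1 - (\<alpha> / 2 + 1) / \<gamma>))))"
proof -
  define p k where "p = \<alpha> / 2 + 1" and "k = sqrt A / p"
  have p: "0 < p" "p < \<gamma>" and k: "0 < k"
    using assms(7-9) unfolding p_def k_def by auto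
  have cont: "continuous_on {a..b} f"
    using continuous_on_subset[OF DERIV_continuous_on] deriv ab by fastforce
  have deriv_at: "(f has_real_derivative f' s) (at s)" if "a < s" "s < b" for s
    using deriv[rule_format, of s] that ab at_within_interior[of s "{\<theta>1..\<theta>2}"] by auto
  have growth: "k * (x - t) powr p \<le> \<bar>f x - f t\<bar>" if "a \<le> t" "t \<le> x" "x \<le> b" for t x
    unfolding k_def p_def using that ab bound assms(7,8)
    by (intro abs_diff_ge_powr_of_deriv_sq_ge[of \<theta>1 t x \<theta>2 A \<alpha> f f'])
      (auto intro: continuous_on_subset[OF cont] continuous_on_subset[OF cont'] deriv_at)
  obtain z where z: "z \<in> {a..b}" and near: "\<And>s. s \<in> {a..b} \<Longrightarrow> \<bar>f s - f z\<bar> \<le> \<bar>f s\<bar>"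
    using exists_point_abs_diff_le_abs[OF ab(2) cont] by blast
  have "k * \<bar>s - z\<bar> powr p \<le> \<bar>f s\<bar>" if "s \<in> {a..b}" for s
    using growth[of z s] growth[of s z] near[OF that] z that
    by (cases "z \<le> s") (auto simp: abs_minus_commute)
  then have "(\<integral>\<^sup>+ s\<in>{a..b}. ennreal (\<bar>f s\<bar> powr (- 1 / \<gamma>)) \<partial>lborel)
      \<le> ennreal (k powr (- 1 / \<gamma>) * (2 * ((b - a) powr (1 - p / \<gamma>) / (1 - p / \<gamma>))))"
    using k p z by (intro nn_integral_abs_powr_neg_le) auto
  also have "\<dots> \<le> ennreal (k powr (- 1 / \<gamma>) * (2 * ((\<theta>2 - \<theta>1) powr (1 - p / \<gamma>) / (1 - p / \<gamma>))))"
    using k p ab by (intro ennreal_leI mult_left_mono divide_right_mono powr_mono2) auto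
  finally show ?thesis
    unfolding k_def p_def .
qed

theorem lemma3p4:
  fixes \<theta>1 \<theta>2 \<gamma> A \<alpha> :: real
  assumes "\<theta>1 < \<theta>2" and "\<gamma> > 1" and "A > 0" and "\<alpha> > 0" and "\<alpha> < 2 * \<gamma> - 2"
  shows "\<exists>C>0. \<forall>(f :: real \<Rightarrow> real) (f' :: real \<Rightarrow> real) (a :: real) (b :: real).
           (\<forall>s\<in>{\<theta>1..\<theta>2}. (f has_real_derivative f' s) (at s within {\<theta>1..\<theta>2}))
         \<and> continuous_on {\<theta>1..\<theta>2} f'
         \<and> \<theta>1 \<le> a \<and> a \<le> b \<and> b \<le> \<theta>2
         \<and> ((\<forall>s\<in>{a..b}. (f' s)\<^sup>2 \<ge> A * (s - \<theta>1) powr \<alpha>)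
            \<or> (\<forall>s\<in>{a..b}. (f' s)\<^sup>2 \<ge> A * (\<theta>2 - s) powr \<alpha>))
         \<longrightarrow> (\<integral>\<^sup>+ s\<in>{a..b}. ennreal (\<bar>f s\<bar> powr (- 1 / \<gamma>)) \<partial>lborel) \<le> ennreal C"
proof -
  define p where "p = \<alpha> / 2 + 1"
  define C where
    "C = (sqrt A / p) powr (- 1 / \<gamma>) * (2 * ((\<theta>2 - \<theta>1) powr (1 - p / \<gamma>) / (1 - p / \<gamma>)))"
  have "0 \<le> \<alpha>" "0 < p" "p < \<gamma>"
    using assms unfolding p_def by auto
  then have "0 < C"
    using assms unfolding C_def by (simp add: field_simps)
  with \<open>0 \<le> \<alpha>\<close> \<open>p < \<gamma>\<close> show ?thesis
    using nn_integral_abs_powr_neg_le_of_deriv_sq_ge[of \<theta>1 \<theta>2 _ _ _ _ A \<alpha> \<gamma>] assms(3)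
    unfolding C_def p_def by blast
qed

end
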